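(* Let $A\in\mathbb{C}^{n\times n}$ be accretive and $\theta\in[0,\pi/2)\cap\Psi(A)$. Let $A_h=(A+A^* )/2$ and $A_s=(A-A^* )/(2j)$. Then $\gamma_\theta(A)=\max\{\sqrt{g^\star},\sqrt{h^\star}\}$, where $g^\star$ and $h^\star$ are the optimal values of the semidefinite programs $$\min_{g,\tau}\ g\quad\text{s.t.}\quad A^*A-gI+\tau(-A_h\tan\theta+A_s)\le0,\ \tau\ge0,\ g\ge0,$$ $$\min_{h,\tau}\ h\quad\text{s.t.}\quad A^*A-hI+\tau(-A_h\tan\theta-A_s)\le0,\ \tau\ge0,\ h\ge0.$$
   Context: Matrix inequality $\le0$ means negative semidefinite. For sectorial $A$ (i.e. $0\notin\{x^*Ax:\|x\|=1\}$), write $A=T^*DT$ with $T$ nonsingular, $D$ diagonal unitary; the phases $\bar\phi(A)\ge\dots\ge\underline\phi(A)$ are the arguments of the diagonal entries of $D$ with $\bar\phi-\underline\phi<\pi$ and $(\bar\phi+\underline\phi)/2\in(-\pi,\pi]$, and $\Psi(A)=[\underline\phi(A),\bar\phi(A)]$. $A$ is accretive if it is sectorial with $\Psi(A)\subset(-\pi/2,\pi/2)$. $\mathcal{DW}(A)=\{(\mathrm{Re}\,x^*Ax,\mathrm{Im}\,x^*Ax,\|Ax\|^2):x\in\mathbb{C}^n,\|x\|=1\}$. For sectorial $A$ and $\theta\in[0,\pi)\cap\Psi(A)$, the constrained gain range is $\mathcal{R}_{\ge\theta}(A)=\{h\ge0:\ \exists z\in\mathbb{C},\ \angle z\notin(-\theta,\theta),\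 (\mathrm{Re}\,z,\mathrm{Im}\,z,h^2)\in\mathcal{DW}(A)\}$ (with $\angle z\in(-\pi,\pi]$), and the constrained gain is $\gamma_\theta(A)=\max\mathcal{R}_{\ge\theta}(A)$. *)

theory Defs
  imports "HOL-Analysis.Analysis"
begin

text \<open>Complex n x n matrices are modelled as complex^'n^'n (index type 'n finite).\<close>

definition cadj :: "complex^'n^'m \<Rightarrow> complex^'m^'n" where
  "cadj M = (\<chi> i j. cnj (M $ j $ i))"

definition cinner :: "complex^'n \<Rightarrow> complex^'n \<Rightarrow> complex" where
  "cinner x y = (\<Sum>i\<in>UNIV. cnj (x $ i) * y $ i)"

definition cscale :: "complex \<Rightarrow> complex^'n^'m \<Rightarrow> complex^'n^'m" where
  "cscale c M = (\<chi> i j. c * M $ i $ j)"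

definition neg_semidef :: "complex^'n^'n \<Rightarrow> bool" where
  "neg_semidef M \<longleftrightarrow> cadj M = M \<and> (\<forall>x. Re (cinner x (M *v x)) \<le> 0)"

definition sectorial :: "complex^'n^'n \<Rightarrow> bool" where
  "sectorial A \<longleftrightarrow> 0 \<notin> {cinner x (A *v x) | x. norm x = 1}"

definition diag_unitary :: "('n \<Rightarrow> real) \<Rightarrow> complex^'n^'n" where
  "diag_unitary \<phi> = (\<chi> i j. if i = j then exp (\<i> * complex_of_real (\<phi> i)) else 0)"

definition phase_decomp :: "complex^'n^'n \<Rightarrow> complex^'n^'n \<Rightarrow> ('n::finite \<Rightarrow> real) \<Rightarrow> bool" where
  "phase_decomp A T \<phi> \<longleftrightarrow> invertible T \<and> A = cadj T ** diag_unitary \<phi> ** T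
     \<and> Max (range \<phi>) - Min (range \<phi>) < pi
     \<and> - pi < (Max (range \<phi>) + Min (range \<phi>)) / 2
     \<and> (Max (range \<phi>) + Min (range \<phi>)) / 2 \<le> pi"

definition Psi :: "complex^'n::finite^'n \<Rightarrow> real set" where
  "Psi A = {t. \<exists>T \<phi>. phase_decomp A T \<phi> \<and> Min (range \<phi>) \<le> t \<and> t \<le> Max (range \<phi>)}"

definition accretive :: "complex^'n::finite^'n \<Rightarrow> bool" where
  "accretive A \<longleftrightarrow> sectorial A \<and> Psi A \<subseteq> {-pi/2<..<pi/2}"

definition DW :: "complex^'n^'n \<Rightarrow> (real \<times> real \<times> real) set" where
  "DW A = {(Re (cinner x (A *v x)), Im (cinner x (A *v x)), (norm (A *v x))^2) | x. norm x = 1}"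

definition gain_range :: "real \<Rightarrow> complex^'n^'n \<Rightarrow> real set" where
  "gain_range \<theta> A = {h. h \<ge> 0 \<and> (\<exists>z::complex. \<not> (- \<theta> < Arg z \<and> Arg z < \<theta>)
       \<and> (Re z, Im z, h^2) \<in> DW A)}"

definition cgain :: "real \<Rightarrow> complex^'n^'n \<Rightarrow> real" where
  "cgain \<theta> A = (GREATEST h. h \<in> gain_range \<theta> A)"

definition herm_part :: "complex^'n^'n \<Rightarrow> complex^'n^'n" where
  "herm_part A = cscale (1/2) (A + cadj A)"

definition skew_part :: "complex^'n^'n \<Rightarrow> complex^'n^'n" where
  "skew_part A = cscale (1 / (2 * \<i>)) (A - cadj A)"

end

theory Submission
  imports Defs
begin

text \<open>
  For accretive A we have Re (x* A x) > 0 whenever x \<noteq> 0, so the point z = x* A x lies outside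
  the open sector |Arg z| < \<theta> exactly when Im z \<ge> tan \<theta> Re z or -Im z \<ge> tan \<theta> Re z, i.e.
  when x* B x \<ge> 0 for one of the two Hermitian matrices B = -tan \<theta> A_h \<plusminus> A_s of the programs.
  Hence \<gamma>_\<theta>(A) is the maximum of |Ax| over the unit vectors satisfying one of these two
  constraints; this compact set is nonempty because \<theta> does not exceed the largest phase of A.

  The value of each program is pinned down by a strict S-lemma: every feasible g bounds |Ax|^2 on
  the unit vectors with x* B x \<ge> 0, and if c is such a bound and g > c, then x* (A* A - g I) x < 0
  wherever x* B x \<ge> 0 and x \<noteq> 0, so some \<tau> \<ge> 0 makes A* A - g I + \<tau> B negative semidefinite.
  The S-lemma itself reduces to a two-dimensional statement: if G(x) > 0 > G(y) and H(x), H(y) > 0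
  for Hermitian forms G, H, then G vanishes at some w = x + c y with H(w) > 0, the phase of c
  being chosen to control the cross terms.
\<close>

section \<open>Hermitian forms\<close>

lemma cinner_commute: "cinner y x = cnj (cinner x y)"
  unfolding cinner_def by (simp add: mult.commute)

lemma cinner_add_left: "cinner (x + y) z = cinner x z + cinner y z"
  unfolding cinner_def by (simp add: distrib_right sum.distrib)

lemma cinner_add_right: "cinner x (y + z) = cinner x y + cinner x z"
  unfolding cinner_def by (simp add: distrib_left sum.distrib)

lemma cinner_diff_right: "cinner x (y - z) = cinner x y - cinner x z"
  unfolding cinner_def by (simp add: right_diff_distrib sum_subtractf)

lemma cinner_scalar_left: "cinner (c *s x) y = cnj c * cinner x y"
  unfolding cinner_def by (simp add: sum_distrib_left mult_ac)

lemma cinner_scalar_right: "cinner x (c *s y) = c * cinner x y"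
  unfolding cinner_def by (simp add: sum_distrib_left mult_ac)

lemma cinner_self: "cinner x x = complex_of_real ((norm x)^2)"
proof -
  have "(norm x)^2 = (\<Sum>i\<in>UNIV. (cmod (x$i))^2)"
    unfolding norm_vec_def L2_set_def by (simp add: sum_nonneg)
  then have "complex_of_real ((norm x)^2) = (\<Sum>i\<in>UNIV. complex_of_real ((cmod (x$i))^2))"
    by simp
  also have "\<dots> = cinner x x"
    unfolding cinner_def by (simp only: complex_norm_square mult.commute)
  finally show ?thesis ..
qed

lemma cinner_cadj_right: "cinner x (cadj M *v y) = cinner (M *v x) y"
proof -
  have "cinner x (cadj M *v y) = (\<Sum>i\<in>UNIV. \<Sum>j\<in>UNIV. cnj (x$i) * cnj (M$j$i) * y$j)"
    unfolding cinner_def cadj_def matrix_vector_mult_def by (simp add: sum_distrib_left mult.assoc)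
  also have "\<dots> = (\<Sum>j\<in>UNIV. \<Sum>i\<in>UNIV. cnj (x$i) * cnj (M$j$i) * y$j)"
    by (rule sum.swap)
  also have "\<dots> = cinner (M *v x) y"
    unfolding cinner_def cadj_def matrix_vector_mult_def
    by (simp add: sum_distrib_right sum_distrib_left mult_ac)
  finally show ?thesis .
qed

lemma cadj_add: "cadj (M + N) = cadj M + cadj N"
  by (simp add: cadj_def vec_eq_iff)

lemma cadj_diff: "cadj (M - N) = cadj M - cadj N"
  by (simp add: cadj_def vec_eq_iff)

lemma cadj_uminus: "cadj (- M) = - cadj M"
  by (simp add: cadj_def vec_eq_iff)

lemma cadj_scaleR: "cadj (r *\<^sub>R M) = r *\<^sub>R cadj M"
  by (simp add: cadj_def vec_eq_iff)

lemma cadj_cadj: "cadj (cadj M) = M"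
  by (simp add: cadj_def vec_eq_iff)

lemma cadj_matrix_mult: "cadj (M ** N) = cadj N ** cadj M"
  by (simp add: cadj_def vec_eq_iff matrix_matrix_mult_def mult.commute)

lemma cadj_cscale: "cadj (cscale c M) = cscale (cnj c) (cadj M)"
  by (simp add: cadj_def vec_eq_iff cscale_def)

lemma cadj_mat_1: "cadj (mat 1 :: complex^'n^'n) = mat 1"
  by (simp add: cadj_def vec_eq_iff mat_def)

lemma cadj_herm_part: "cadj (herm_part A) = herm_part A"
  unfolding herm_part_def by (simp add: cadj_cscale cadj_add cadj_cadj add.commute)

lemma cadj_skew_part: "cadj (skew_part A) = skew_part A"
proof -
  have "cnj (1 / (2 * \<i>)) = - (1 / (2 * \<i>))"
    by (simp add: complex_eq_iff)
  then show ?thesis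
    unfolding skew_part_def
    by (simp add: cadj_cscale cadj_diff cadj_cadj) (simp add: cscale_def vec_eq_iff algebra_simps)
qed

lemma cscale_matrix_vector_mult: "cscale c M *v x = c *s (M *v x)"
  by (simp add: vec_eq_iff matrix_vector_mult_def cscale_def sum_distrib_left mult_ac)

lemma scaleR_eq_scalar_mult: "r *\<^sub>R (x::complex^'n) = complex_of_real r *s x"
  unfolding vec_eq_iff vector_scaleR_component vector_smult_component
  by (simp only: scaleR_conv_of_real simp_thms)

lemma scaleR_matrix_vector_mult: "(r *\<^sub>R M) *v x = r *\<^sub>R (M *v (x::complex^'n))"
  by (simp add: vec_eq_iff matrix_vector_mult_def scaleR_sum_right)

lemma cinner_scaleR_quadratic:
  "cinner (r *\<^sub>R x) (M *v (r *\<^sub>R x)) = complex_of_real (r^2) * cinner x (M *v x)"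
  by (simp add: scaleR_eq_scalar_mult vector_scalar_commute cinner_scalar_left cinner_scalar_right
      power2_eq_square)

definition qform :: "complex^'n^'n \<Rightarrow> complex^'n \<Rightarrow> real" where
  "qform M x = Re (cinner x (M *v x))"

lemma qform_add: "qform (M + N) x = qform M x + qform N x"
  unfolding qform_def by (simp add: matrix_vector_mult_add_rdistrib cinner_add_right)

lemma qform_diff: "qform (M - N) x = qform M x - qform N x"
  unfolding qform_def by (simp add: matrix_vector_mult_diff_rdistrib cinner_diff_right)

lemma qform_uminus: "qform (- M) x = - qform M x"
  using qform_diff[of 0 M x] by (simp add: qform_def cinner_def)

lemma qform_scaleR: "qform (r *\<^sub>R M) x = r * qform M x"
  unfolding qform_def scaleR_matrix_vector_mult scaleR_eq_scalar_mult cinner_scalar_right by simp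

lemma qform_zero_right: "qform M 0 = 0"
  unfolding qform_def by (simp add: cinner_def)

lemma qform_scaleR_right: "qform M (r *\<^sub>R x) = r^2 * qform M x"
  unfolding qform_def cinner_scaleR_quadratic by simp

lemma qform_sgn: "qform M x = (norm x)^2 * qform M (sgn x)"
  by (cases "x = 0") (simp_all add: qform_zero_right sgn_div_norm qform_scaleR_right field_simps)

lemma qform_cadj_mult_self: "qform (cadj A ** A) x = (norm (A *v x))^2"
  unfolding qform_def by (simp add: matrix_vector_mul_assoc[symmetric] cinner_cadj_right cinner_self)

lemma qform_cscale_mat_1: "qform (cscale (complex_of_real g) (mat 1)) x = g * (norm x)^2"
  unfolding qform_def cscale_matrix_vector_mult by (simp add: cinner_scalar_right cinner_self)

lemma qform_herm_part: "qform (herm_part A) x = Re (cinner x (A *v x))"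
  unfolding qform_def herm_part_def cscale_matrix_vector_mult
  by (simp add: cinner_scalar_right matrix_vector_mult_add_rdistrib cinner_add_right
      cinner_cadj_right cinner_commute[of x "A *v x"])

lemma qform_skew_part: "qform (skew_part A) x = Im (cinner x (A *v x))"
proof -
  have "cinner x (cadj A *v x) = cnj (cinner x (A *v x))"
    by (simp add: cinner_cadj_right cinner_commute[of x "A *v x"])
  then have "cinner x (skew_part A *v x)
      = 1 / (2 * \<i>) * (complex_of_real (2 * Im (cinner x (A *v x))) * \<i>)"
    unfolding skew_part_def cscale_matrix_vector_mult cinner_scalar_right
      matrix_vector_mult_diff_rdistrib cinner_diff_right
    by (simp only: complex_diff_cnj)
  also have "\<dots> = complex_of_real (Im (cinner x (A *v x)))"
    by (simp add: field_simps)
  finally show ?thesis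
    unfolding qform_def by simp
qed

lemma qform_add_scalar_mult:
  assumes "cadj M = M"
  shows "qform M (x + c *s y) = qform M x + 2 * Re (c * cinner x (M *v y)) + (cmod c)^2 * qform M y"
proof -
  have yx: "cinner y (M *v x) = cnj (cinner x (M *v y))"
    using cinner_cadj_right[of y M x] assms by (simp add: cinner_commute[of "M *v y" x])
  have "cinner (x + c *s y) (M *v (x + c *s y)) =
        cinner x (M *v x) + c * cinner x (M *v y) + cnj (c * cinner x (M *v y))
        + (c * cnj c) * cinner y (M *v y)"
    by (simp add: matrix_vector_right_distrib vector_scalar_commute cinner_add_left cinner_add_right
        cinner_scalar_left cinner_scalar_right yx algebra_simps)
  then show ?thesis
    unfolding qform_def complex_norm_square[symmetric] by simp
qed

lemma continuous_on_qform: "continuous_on S (qform M)"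
  unfolding qform_def[abs_def] cinner_def matrix_vector_mult_def
  by (intro continuous_intros)

section \<open>A strict S-lemma\<close>

lemma exists_qform_zero_qform_pos:
  assumes hG: "cadj G = G" and hH: "cadj H = H"
    and Gx: "qform G x > 0" and Gy: "qform G y < 0" and Hx: "qform H x > 0" and Hy: "qform H y > 0"
  shows "\<exists>w. qform G w = 0 \<and> qform H w > 0"
proof -
  define b where "b = cinner x (G *v y)"
  define p where "p = cinner x (H *v y)"
  \<comment> \<open>The phase of u kills the cross term of G and makes that of H nonnegative;
      then w = x + t u y solves G w = 0 for a suitable t \<ge> 0.\<close>
  obtain u where u: "u \<noteq> 0" "Re (u * b) = 0" "Re (u * p) \<ge> 0"
  proof -
    define u0 where "u0 = (if b = 0 then 1 else \<i> * cnj b)"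
    have "u0 \<noteq> 0" "Re (u0 * b) = 0"
      unfolding u0_def by auto
    then show thesis
      by (cases "Re (u0 * p) \<ge> 0") (auto intro: that[of u0] that[of "- u0"])
  qed
  have u2: "(cmod u)^2 > 0"
    using u by simp
  define t where "t = sqrt (qform G x / ((cmod u)^2 * (- qform G y)))"
  have "0 \<le> qform G x / ((cmod u)^2 * (- qform G y))"
    using Gx Gy u2 by (intro divide_nonneg_pos mult_pos_pos) auto
  then have t2: "t^2 = qform G x / ((cmod u)^2 * (- qform G y))" and t0: "t \<ge> 0"
    unfolding t_def by simp_all
  define c where "c = complex_of_real t * u"
  have cmod_c: "(cmod c)^2 = t^2 * (cmod u)^2"
    unfolding c_def by (simp add: norm_mult power_mult_distrib t0)
  define w where "w = x + c *s y"
  have "qform G w = qform G x + t^2 * (cmod u)^2 * qform G y"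
    unfolding w_def qform_add_scalar_mult[OF hG] b_def[symmetric] cmod_c
    using u(2) by (simp add: c_def)
  also have "\<dots> = 0"
    unfolding t2 using Gy u2 by (simp add: field_simps)
  finally have "qform G w = 0" .
  moreover have "qform H w = qform H x + 2 * (t * Re (u * p)) + t^2 * (cmod u)^2 * qform H y"
    unfolding w_def qform_add_scalar_mult[OF hH] p_def[symmetric] cmod_c
    by (simp add: c_def algebra_simps)
  moreover have "\<dots> > 0"
    using Hx Hy u t0 u2 by (intro add_pos_nonneg add_nonneg_nonneg) auto
  ultimately show ?thesis
    by auto
qed

lemma S_lemma_ratio_le:
  assumes hF: "cadj F = F" and hG: "cadj G = G"
    and strict: "\<And>w. w \<noteq> 0 \<Longrightarrow> qform G w \<ge> 0 \<Longrightarrow> qform F w < 0"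
    and Gx: "qform G x > 0" and Gy: "qform G y < 0"
  shows "- qform F y / qform G y \<le> - qform F x / qform G x"
proof (rule ccontr)
  assume "\<not> ?thesis"
  then obtain \<tau> where lower: "- qform F x / qform G x < \<tau>" and upper: "\<tau> < - qform F y / qform G y"
    using dense not_le by blast
  define K where "K = F + \<tau> *\<^sub>R G"
  have hK: "cadj K = K"
    unfolding K_def by (simp add: cadj_add cadj_scaleR hF hG)
  have qK: "qform K v = qform F v + \<tau> * qform G v" for v
    unfolding K_def by (simp add: qform_add qform_scaleR)
  have "qform K x > 0"
    using lower Gx unfolding qK by (simp add: field_simps)
  moreover have "qform K y > 0"
    using upper Gy unfolding qK by (simp add: field_simps)
  ultimately obtain w where w: "qform G w = 0" "qform K w > 0"
    using exists_qform_zero_qform_pos[OF hG hK Gx Gy] by blast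
  then have "qform F w > 0"
    unfolding qK by simp
  moreover from this have "w \<noteq> 0"
    by (auto simp: qform_zero_right)
  ultimately show False
    using strict[of w] w by simp
qed

lemma qform_nonpos_if_nonpos_on_sphere:
  assumes "\<And>u. norm u = 1 \<Longrightarrow> qform M u \<le> 0"
  shows "qform M x \<le> 0"
  using assms[of "sgn x"] qform_sgn[of M x]
  by (cases "x = 0") (simp_all add: qform_zero_right norm_sgn mult_nonneg_nonpos)

lemma S_lemma_strict_indefinite:
  assumes hF: "cadj F = F" and hG: "cadj G = G"
    and strict: "\<And>w. w \<noteq> 0 \<Longrightarrow> qform G w \<ge> 0 \<Longrightarrow> qform F w < 0"
    and Gx0: "qform G x0 > 0"
  shows "\<exists>\<tau>\<ge>0. \<forall>x. qform (F + \<tau> *\<^sub>R G) x \<le> 0"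
proof -
  have F_neg: "qform F x < 0" if "qform G x > 0" for x
    using that strict[of x] qform_zero_right[of G] by (cases "x = 0") auto
  \<comment> \<open>The multiplier is the largest ratio -F/G over the region G < 0 (or 0);
      the ratios over G > 0 bound it from above.\<close>
  define L where "L = insert 0 {- qform F y / qform G y | y. qform G y < 0}"
  have L_le: "l \<le> - qform F x / qform G x" if "l \<in> L" "qform G x > 0" for l x
    using that F_neg[of x] S_lemma_ratio_le[OF hF hG strict, of x]
    unfolding L_def by (auto simp: divide_nonpos_pos)
  have bdd: "bdd_above L"
    using L_le Gx0 by (meson bdd_aboveI)
  define \<tau> where "\<tau> = Sup L"
  have \<tau>0: "\<tau> \<ge> 0"
    unfolding \<tau>_def using bdd by (intro cSup_upper) (auto simp: L_def)
  have "qform F x + \<tau> * qform G x \<le> 0" for x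
  proof (cases "qform G x" "0 :: real" rule: linorder_cases)
    case less
    then have "- qform F x / qform G x \<le> \<tau>"
      unfolding \<tau>_def using bdd by (intro cSup_upper) (auto simp: L_def)
    then show ?thesis
      using less by (simp add: field_simps)
  next
    case equal
    then show ?thesis
      using strict[of x] by (cases "x = 0") (auto simp: qform_zero_right)
  next
    case greater
    then have "\<tau> \<le> - qform F x / qform G x"
      unfolding \<tau>_def by (intro cSup_least L_le) (auto simp: L_def)
    then show ?thesis
      using greater by (simp add: field_simps)
  qed
  then show ?thesis
    using \<tau>0 by (auto simp: qform_add qform_scaleR)
qed

lemma S_lemma_strict_nonpos:
  fixes F G :: "complex^'n^'n"
  assumes strict: "\<And>w. w \<noteq> 0 \<Longrightarrow> qform G w \<ge> 0 \<Longrightarrow> qform F w < 0"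
    and G_nonpos: "\<And>x. qform G x \<le> 0"
  shows "\<exists>\<tau>\<ge>0. \<forall>x. qform (F + \<tau> *\<^sub>R G) x \<le> 0"
proof -
  define K where "K = sphere 0 1 \<inter> {x. 0 \<le> qform F x}"
  have "sphere (0::complex^'n) 1 \<noteq> {}"
    by simp
  then obtain x2 where x2: "\<And>y. y \<in> sphere 0 1 \<Longrightarrow> qform F y \<le> qform F x2"
    using continuous_attains_sup[OF compact_sphere _ continuous_on_qform] by blast
  have "compact K"
    unfolding K_def
    by (intro compact_Int_closed compact_sphere closed_Collect_le continuous_on_const continuous_on_qform)
  show ?thesis
  proof (cases "K = {}")
    case True
    then have "qform (F + 0 *\<^sub>R G) u \<le> 0" if "norm u = 1" for u
      using that unfolding K_def by (auto simp: qform_add qform_scaleR)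
    then show ?thesis
      using qform_nonpos_if_nonpos_on_sphere by blast
  next
    case False
    obtain x1 where x1: "x1 \<in> K" "\<And>y. y \<in> K \<Longrightarrow> qform G y \<le> qform G x1"
      using continuous_attains_sup[OF \<open>compact K\<close> False continuous_on_qform] by blast
    have "x1 \<noteq> 0" "qform F x1 \<ge> 0"
      using x1(1) unfolding K_def by auto
    then have "qform G x1 < 0"
      using strict[of x1] G_nonpos[of x1] by linarith
    define \<tau> where "\<tau> = max 0 (qform F x2) / (- qform G x1)"
    have \<tau>0: "\<tau> \<ge> 0"
      unfolding \<tau>_def using \<open>qform G x1 < 0\<close> by (intro divide_nonneg_pos) auto
    have "qform F u + \<tau> * qform G u \<le> 0" if "norm u = 1" for u
    proof (cases "u \<in> K")
      case True
      have "\<tau> * qform G u \<le> \<tau> * qform G x1"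
        using x1(2)[OF True] \<tau>0 by (simp add: mult_left_mono)
      also have "\<dots> = - max 0 (qform F x2)"
        unfolding \<tau>_def using \<open>qform G x1 < 0\<close> by simp
      finally show ?thesis
        using x2[of u] that by simp
    next
      case False
      then have "qform F u < 0"
        using that unfolding K_def by auto
      moreover have "\<tau> * qform G u \<le> 0"
        using \<tau>0 G_nonpos[of u] by (rule mult_nonneg_nonpos)
      ultimately show ?thesis
        by linarith
    qed
    then show ?thesis
      using \<tau>0 qform_nonpos_if_nonpos_on_sphere[of "F + \<tau> *\<^sub>R G"]
      by (auto simp: qform_add qform_scaleR)
  qed
qed

lemma S_lemma_strict:
  assumes "cadj F = F" and "cadj G = G"
    and "\<And>w. w \<noteq> 0 \<Longrightarrow> qform G w \<ge> 0 \<Longrightarrow> qform F w < 0"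
  shows "\<exists>\<tau>\<ge>0. \<forall>x. qform (F + \<tau> *\<^sub>R G) x \<le> 0"
proof (cases "\<exists>x. qform G x > 0")
  case True
  then show ?thesis
    using S_lemma_strict_indefinite[OF assms] by blast
next
  case False
  then show ?thesis
    using S_lemma_strict_nonpos[OF assms(3)] by (simp add: not_less)
qed

section \<open>The semidefinite programs\<close>

definition gain_sdp_feasible :: "complex^'n^'n \<Rightarrow> complex^'n^'n \<Rightarrow> real set" where
  "gain_sdp_feasible A B = {g. \<exists>\<tau>. \<tau> \<ge> 0 \<and> g \<ge> 0 \<and>
     neg_semidef (cadj A ** A - cscale (complex_of_real g) (mat 1) + \<tau> *\<^sub>R B)}"

lemma qform_gain_sdp_matrix:
  "qform (cadj A ** A - cscale (complex_of_real g) (mat 1) + \<tau> *\<^sub>R B) x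
     = (norm (A *v x))^2 - g * (norm x)^2 + \<tau> * qform B x"
  by (simp add: qform_add qform_diff qform_cadj_mult_self qform_cscale_mat_1 qform_scaleR)

lemma neg_semidef_iff_qform: "neg_semidef M \<longleftrightarrow> cadj M = M \<and> (\<forall>x. qform M x \<le> 0)"
  unfolding neg_semidef_def qform_def ..

lemma norm_sq_le_gain_sdp_feasible:
  assumes "g \<in> gain_sdp_feasible A B" and "norm x = 1" and "qform B x \<ge> 0"
  shows "(norm (A *v x))^2 \<le> g"
proof -
  obtain \<tau> where "\<tau> \<ge> 0"
    and "neg_semidef (cadj A ** A - cscale (complex_of_real g) (mat 1) + \<tau> *\<^sub>R B)"
    using assms(1) unfolding gain_sdp_feasible_def by blast
  then have "qform (cadj A ** A - cscale (complex_of_real g) (mat 1) + \<tau> *\<^sub>R B) x \<le> 0"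
    and "\<tau> * qform B x \<ge> 0"
    using assms(3) unfolding neg_semidef_iff_qform by simp_all
  then show ?thesis
    using assms(2) unfolding qform_gain_sdp_matrix by simp
qed

lemma gain_sdp_feasible_if_bound:
  fixes A B :: "complex^'n^'n"
  assumes hB: "cadj B = B"
    and bound: "\<And>x. norm x = 1 \<Longrightarrow> qform B x \<ge> 0 \<Longrightarrow> (norm (A *v x))^2 \<le> c"
    and "0 \<le> c" and "c < g"
  shows "g \<in> gain_sdp_feasible A B"
proof -
  define F where "F = cadj A ** A - cscale (complex_of_real g) (mat 1)"
  have hF: "cadj F = F"
    unfolding F_def by (simp add: cadj_diff cadj_matrix_mult cadj_cadj cadj_cscale cadj_mat_1)
  have qF: "qform F w = (norm (A *v w))^2 - g * (norm w)^2" for w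
    unfolding F_def by (simp only: qform_diff qform_cadj_mult_self qform_cscale_mat_1)
  have "qform F w < 0" if "w \<noteq> 0" "qform B w \<ge> 0" for w
  proof -
    have "qform B (sgn w) \<ge> 0"
      using that qform_sgn[of B w] by (simp add: zero_le_mult_iff)
    then have "(norm (A *v sgn w))^2 \<le> c"
      using bound that by (simp add: norm_sgn)
    then have "(norm (A *v w))^2 \<le> (norm w)^2 * c"
      using qform_sgn[of "cadj A ** A" w] by (simp add: qform_cadj_mult_self mult_left_mono)
    also have "\<dots> < g * (norm w)^2"
      using that \<open>c < g\<close> by (simp add: mult.commute)
    finally show ?thesis
      unfolding qF by simp
  qed
  then obtain \<tau> where "\<tau> \<ge> 0" "\<forall>x. qform (F + \<tau> *\<^sub>R B) x \<le> 0"
    using S_lemma_strict[OF hF hB] by blast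
  moreover have "cadj (F + \<tau> *\<^sub>R B) = F + \<tau> *\<^sub>R B"
    by (simp add: cadj_add cadj_scaleR hF hB)
  ultimately show ?thesis
    unfolding gain_sdp_feasible_def F_def neg_semidef_iff_qform using assms(3,4) by auto
qed

lemma Inf_gain_sdp_feasible_bounds:
  fixes A B :: "complex^'n^'n"
  assumes "cadj B = B" and "0 \<le> c"
    and bound: "\<And>x. norm x = 1 \<Longrightarrow> qform B x \<ge> 0 \<Longrightarrow> (norm (A *v x))^2 \<le> c"
  shows "Inf (gain_sdp_feasible A B) \<le> c"
    and "\<And>x. norm x = 1 \<Longrightarrow> qform B x \<ge> 0 \<Longrightarrow> (norm (A *v x))^2 \<le> Inf (gain_sdp_feasible A B)"
proof -
  have mem: "c + e \<in> gain_sdp_feasible A B" if "e > 0" for e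
    using gain_sdp_feasible_if_bound[OF assms(1) bound assms(2)] that by simp
  have bdd: "bdd_below (gain_sdp_feasible A B)"
    unfolding gain_sdp_feasible_def by (intro bdd_belowI[where m=0]) auto
  show "Inf (gain_sdp_feasible A B) \<le> c"
    using mem bdd by (meson cInf_lower field_le_epsilon)
  show "(norm (A *v x))^2 \<le> Inf (gain_sdp_feasible A B)" if "norm x = 1" "qform B x \<ge> 0" for x
    using mem[of 1] that by (intro cInf_greatest norm_sq_le_gain_sdp_feasible) auto
qed

section \<open>Phase decomposition and the sector condition\<close>

lemma cinner_diag_unitary:
  "cinner y (diag_unitary \<phi> *v y) =
     (\<Sum>k\<in>UNIV. exp (\<i> * complex_of_real (\<phi> k)) * complex_of_real ((cmod (y $ k))^2))"
proof -
  have "diag_unitary \<phi> *v y = (\<chi> k. exp (\<i> * complex_of_real (\<phi> k)) * y $ k)"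
    by (simp add: vec_eq_iff matrix_vector_mult_def diag_unitary_def if_distrib if_distribR
        cong: if_cong)
  then show ?thesis
    unfolding cinner_def by (simp add: complex_norm_square mult_ac del: of_real_power)
qed

lemma cinner_congruence:
  "cinner x ((cadj T ** D ** T) *v x) = cinner (T *v x) (D *v (T *v x))"
  by (simp add: matrix_vector_mul_assoc[symmetric] cinner_cadj_right)

lemma phase_in_Psi:
  assumes "phase_decomp A T \<phi>"
  shows "\<phi> k \<in> Psi A"
proof -
  have "Min (range \<phi>) \<le> \<phi> k" and "\<phi> k \<le> Max (range \<phi>)"
    by (simp_all add: Min_le Max_ge)
  then show ?thesis
    unfolding Psi_def using assms by blast
qed

lemma accretive_phase_bounds:
  assumes "accretive A" and "phase_decomp A T \<phi>"
  shows "- (pi/2) < \<phi> k" and "\<phi> k < pi/2"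
proof -
  have "Psi A \<subseteq> {- (pi/2)<..<pi/2}"
    using assms(1) unfolding accretive_def by simp
  then have "\<phi> k \<in> {- (pi/2)<..<pi/2}"
    using phase_in_Psi[OF assms(2)] by blast
  then show "- (pi/2) < \<phi> k" and "\<phi> k < pi/2"
    by simp_all
qed

lemma accretive_Re_cinner_pos:
  assumes "accretive A" and pd: "phase_decomp A T \<phi>" and "x \<noteq> 0"
  shows "Re (cinner x (A *v x)) > 0"
proof -
  have invT: "invertible T" and A_eq: "A = cadj T ** diag_unitary \<phi> ** T"
    using pd unfolding phase_decomp_def by auto
  have cos_pos: "cos (\<phi> k) > 0" for k
    using accretive_phase_bounds[OF assms(1,2)] by (intro cos_gt_zero_pi)
  have "T *v x \<noteq> 0"
    using inj_matrix_vector_mult[OF invT] \<open>x \<noteq> 0\<close> by (metis injD matrix_vector_mult_0_right)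
  then obtain k where "(T *v x) $ k \<noteq> 0"
    by (auto simp: vec_eq_iff)
  have "Re (cinner x (A *v x)) = (\<Sum>i\<in>UNIV. cos (\<phi> i) * (cmod ((T *v x) $ i))^2)"
    unfolding A_eq cinner_congruence cinner_diag_unitary Re_sum by (simp add: Re_exp)
  also have "\<dots> > 0"
  proof (rule sum_pos2[of UNIV k])
    show "0 \<le> cos (\<phi> i) * (cmod ((T *v x) $ i))^2" for i
      using cos_pos[of i] by simp
    show "0 < cos (\<phi> k) * (cmod ((T *v x) $ k))^2"
      using cos_pos[of k] \<open>(T *v x) $ k \<noteq> 0\<close> by simp
  qed simp_all
  finally show ?thesis .
qed

lemma phase_decomp_exists_unit_Arg:
  assumes "accretive A" and pd: "phase_decomp A T \<phi>"
  shows "\<exists>x. norm x = 1 \<and> Arg (cinner x (A *v x)) = \<phi> k"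
proof -
  have A_eq: "A = cadj T ** diag_unitary \<phi> ** T"
    using pd unfolding phase_decomp_def by auto
  obtain T' where T': "T ** T' = mat 1"
    using pd unfolding phase_decomp_def invertible_def by blast
  define y where "y = T' *v axis k 1"
  have Ty: "T *v y = axis k 1"
    unfolding y_def by (simp add: matrix_vector_mul_assoc T')
  then have "y \<noteq> 0"
    by (auto simp: axis_eq_0_iff)
  have axis_sq: "(cmod (axis k 1 $ j))^2 = (if j = k then 1 else 0)" for j
    by (simp add: axis_def)
  have "cinner y (A *v y) = exp (\<i> * complex_of_real (\<phi> k))"
    unfolding A_eq cinner_congruence Ty cinner_diag_unitary axis_sq
    by (simp add: if_distrib cong: if_cong)
  moreover have "cinner (sgn y) (A *v sgn y) = complex_of_real ((inverse (norm y))^2) * cinner y (A *v y)"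
    unfolding sgn_div_norm by (rule cinner_scaleR_quadratic)
  moreover have "Arg (exp (\<i> * complex_of_real (\<phi> k))) = \<phi> k"
    using accretive_phase_bounds[OF assms, of k] pi_gt_zero by (subst Arg_exp) auto
  moreover have "0 < (inverse (norm y))^2"
    using \<open>y \<noteq> 0\<close> by simp
  ultimately have "Arg (cinner (sgn y) (A *v sgn y)) = \<phi> k"
    by (simp only: Arg_times_of_real)
  then show ?thesis
    using \<open>y \<noteq> 0\<close> by (intro exI[of _ "sgn y"]) (simp add: norm_sgn)
qed

lemma outside_sector_iff:
  assumes "Re z > 0" and "0 \<le> \<theta>" and "\<theta> < pi/2"
  shows "\<not> (- \<theta> < Arg z \<and> Arg z < \<theta>) \<longleftrightarrow>
     Im z - tan \<theta> * Re z \<ge> 0 \<or> - Im z - tan \<theta> * Re z \<ge> 0"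
proof -
  have Arg_z: "Arg z = arctan (Im z / Re z)"
    using assms(1) by (rule arg_conv_arctan)
  have \<theta>_eq: "\<theta> = arctan (tan \<theta>)"
    using assms by (intro arctan_tan[symmetric]) auto
  have "- \<theta> < Arg z \<longleftrightarrow> - tan \<theta> * Re z < Im z"
    unfolding Arg_z by (subst \<theta>_eq) (simp add: arctan_minus[symmetric] arctan_less_iff
        pos_less_divide_eq assms(1))
  moreover have "Arg z < \<theta> \<longleftrightarrow> Im z < tan \<theta> * Re z"
    unfolding Arg_z by (subst \<theta>_eq) (simp add: arctan_less_iff pos_divide_less_eq assms(1))
  ultimately show ?thesis
    by auto
qed

definition sector_complement :: "real \<Rightarrow> complex^'n^'n \<Rightarrow> (complex^'n) set" where
  "sector_complement \<theta> A =
     {x. norm x = 1 \<and> \<not> (- \<theta> < Arg (cinner x (A *v x)) \<and> Arg (cinner x (A *v x)) < \<theta>)}"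

definition qform_nonneg_sphere :: "complex^'n^'n \<Rightarrow> complex^'n^'n \<Rightarrow> (complex^'n) set" where
  "qform_nonneg_sphere B C = {x. norm x = 1 \<and> (0 \<le> qform B x \<or> 0 \<le> qform C x)}"

lemma gain_range_eq_image: "gain_range \<theta> A = (\<lambda>x. norm (A *v x)) ` sector_complement \<theta> A"
proof (intro equalityI subsetI)
  fix h assume "h \<in> gain_range \<theta> A"
  then obtain z where "h \<ge> 0" "\<not> (- \<theta> < Arg z \<and> Arg z < \<theta>)" "(Re z, Im z, h^2) \<in> DW A"
    unfolding gain_range_def by blast
  moreover from this obtain x where "norm x = 1"
    and "(Re z, Im z, h^2) = (Re (cinner x (A *v x)), Im (cinner x (A *v x)), (norm (A *v x))^2)"
    unfolding DW_def by blast
  ultimately have "z = cinner x (A *v x)" and "h = norm (A *v x)"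
    by (simp_all add: complex_eq_iff power2_eq_iff_nonneg)
  with \<open>norm x = 1\<close> \<open>\<not> (- \<theta> < Arg z \<and> Arg z < \<theta>)\<close>
  show "h \<in> (\<lambda>x. norm (A *v x)) ` sector_complement \<theta> A"
    unfolding sector_complement_def by blast
next
  fix h assume "h \<in> (\<lambda>x. norm (A *v x)) ` sector_complement \<theta> A"
  then show "h \<in> gain_range \<theta> A"
    unfolding sector_complement_def gain_range_def DW_def
    by (auto intro!: exI[of _ "cinner _ (A *v _)"])
qed

lemma cgain_eq_norm_of_maximizer:
  assumes "xs \<in> sector_complement \<theta> A"
    and "\<And>x. x \<in> sector_complement \<theta> A \<Longrightarrow> norm (A *v x) \<le> norm (A *v xs)"
  shows "cgain \<theta> A = norm (A *v xs)"
  unfolding cgain_def gain_range_eq_image using assms by (intro Greatest_equality) auto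

lemma accretive_sector_complement_eq:
  fixes A :: "complex^'n::finite^'n"
  assumes "accretive A" and "phase_decomp A T \<phi>" and "0 \<le> \<theta>" and "\<theta> < pi/2"
  shows "sector_complement \<theta> A = qform_nonneg_sphere
    (- (tan \<theta> *\<^sub>R herm_part A) + skew_part A) (- (tan \<theta> *\<^sub>R herm_part A) - skew_part A)"
  unfolding sector_complement_def qform_nonneg_sphere_def
proof (rule Collect_cong)
  fix x :: "complex^'n"
  have "qform (- (tan \<theta> *\<^sub>R herm_part A) + skew_part A) x
      = Im (cinner x (A *v x)) - tan \<theta> * Re (cinner x (A *v x))"
    and "qform (- (tan \<theta> *\<^sub>R herm_part A) - skew_part A) x
      = - Im (cinner x (A *v x)) - tan \<theta> * Re (cinner x (A *v x))"
    by (simp_all add: qform_add qform_diff qform_uminus qform_scaleR qform_herm_part qform_skew_part)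
  moreover have "Re (cinner x (A *v x)) > 0" if "norm x = 1"
    using that by (intro accretive_Re_cinner_pos[OF assms(1,2)]) auto
  ultimately show "norm x = 1 \<and> \<not> (- \<theta> < Arg (cinner x (A *v x)) \<and> Arg (cinner x (A *v x)) < \<theta>) \<longleftrightarrow>
    norm x = 1 \<and> (0 \<le> qform (- (tan \<theta> *\<^sub>R herm_part A) + skew_part A) x \<or>
                  0 \<le> qform (- (tan \<theta> *\<^sub>R herm_part A) - skew_part A) x)"
    using outside_sector_iff[OF _ assms(3,4)] by auto
qed

lemma accretive_sector_complement_nonempty:
  assumes "accretive A" and "phase_decomp A T \<phi>" and "\<theta> \<le> Max (range \<phi>)"
  shows "sector_complement \<theta> A \<noteq> {}"
proof -
  have "Max (range \<phi>) \<in> range \<phi>"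
    by (intro Max_in) auto
  then obtain k where "\<phi> k = Max (range \<phi>)"
    by (metis rangeE)
  then show ?thesis
    using phase_decomp_exists_unit_Arg[OF assms(1,2), of k] assms(3)
    unfolding sector_complement_def by force
qed

lemma exists_max_norm_on_qform_nonneg_sphere:
  assumes "qform_nonneg_sphere B C \<noteq> {}"
  obtains xs where "xs \<in> qform_nonneg_sphere B C"
    and "\<And>x. x \<in> qform_nonneg_sphere B C \<Longrightarrow> norm (A *v x) \<le> norm (A *v xs)"
proof -
  have compact: "compact (qform_nonneg_sphere B C)"
    unfolding qform_nonneg_sphere_def Collect_conj_eq Collect_disj_eq
    by (intro compact_Int_closed compact_sphere[of 0 1, unfolded sphere_def, simplified] closed_Un
        closed_Collect_le continuous_on_const continuous_on_qform)
  have "continuous_on (qform_nonneg_sphere B C) (\<lambda>x. norm (A *v x))"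
    by (intro continuous_intros)
  with that show ?thesis
    using continuous_attains_sup[OF compact assms] by blast
qed

lemma max_sqrt_Inf_gain_sdp_feasible:
  fixes A B C :: "complex^'n^'n"
  assumes hB: "cadj B = B" and hC: "cadj C = C" and xs: "xs \<in> qform_nonneg_sphere B C"
    and xs_max: "\<And>x. x \<in> qform_nonneg_sphere B C \<Longrightarrow> norm (A *v x) \<le> norm (A *v xs)"
  shows "max (sqrt (Inf (gain_sdp_feasible A B))) (sqrt (Inf (gain_sdp_feasible A C)))
    = norm (A *v xs)"
proof -
  define c where "c = (norm (A *v xs))^2"
  have "0 \<le> c"
    unfolding c_def by simp
  have bound: "(norm (A *v x))^2 \<le> c" if "norm x = 1" "0 \<le> qform B x \<or> 0 \<le> qform C x" for x
    unfolding c_def using xs_max[of x] that by (simp add: qform_nonneg_sphere_def power_mono)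
  note IB = Inf_gain_sdp_feasible_bounds[OF hB \<open>0 \<le> c\<close> bound]
    and IC = Inf_gain_sdp_feasible_bounds[OF hC \<open>0 \<le> c\<close> bound]
  have "c \<le> max (Inf (gain_sdp_feasible A B)) (Inf (gain_sdp_feasible A C))"
    using xs IB(2)[of xs] IC(2)[of xs]
    unfolding qform_nonneg_sphere_def c_def by (auto simp: le_max_iff_disj)
  then have "max (Inf (gain_sdp_feasible A B)) (Inf (gain_sdp_feasible A C)) = c"
    using IB(1) IC(1) by simp
  then show ?thesis
    unfolding c_def by (auto simp: max_def split: if_splits)
qed

theorem proposition4:
  fixes A :: "complex^'n::finite^'n" and \<theta> :: real
  assumes "accretive A" and "0 \<le> \<theta>" and "\<theta> < pi/2" and "\<theta> \<in> Psi A"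
  shows "cgain \<theta> A =
    max (sqrt (Inf {g. \<exists>\<tau>. \<tau> \<ge> 0 \<and> g \<ge> 0 \<and>
            neg_semidef (cadj A ** A - cscale (complex_of_real g) (mat 1)
              + \<tau> *\<^sub>R (- (tan \<theta> *\<^sub>R herm_part A) + skew_part A))}))
        (sqrt (Inf {h. \<exists>\<tau>. \<tau> \<ge> 0 \<and> h \<ge> 0 \<and>
            neg_semidef (cadj A ** A - cscale (complex_of_real h) (mat 1)
              + \<tau> *\<^sub>R (- (tan \<theta> *\<^sub>R herm_part A) - skew_part A))}))"
proof -
  obtain T \<phi> where pd: "phase_decomp A T \<phi>" and "\<theta> \<le> Max (range \<phi>)"
    using assms(4) unfolding Psi_def by blast
  define B1 where "B1 = - (tan \<theta> *\<^sub>R herm_part A) + skew_part A"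
  define B2 where "B2 = - (tan \<theta> *\<^sub>R herm_part A) - skew_part A"
  have sector_eq: "sector_complement \<theta> A = qform_nonneg_sphere B1 B2"
    unfolding B1_def B2_def by (rule accretive_sector_complement_eq[OF assms(1) pd assms(2,3)])
  moreover have "sector_complement \<theta> A \<noteq> {}"
    by (rule accretive_sector_complement_nonempty[OF assms(1) pd \<open>\<theta> \<le> Max (range \<phi>)\<close>])
  ultimately have "qform_nonneg_sphere B1 B2 \<noteq> {}"
    by simp
  then obtain xs where xs: "xs \<in> qform_nonneg_sphere B1 B2"
    and xs_max: "\<And>x. x \<in> qform_nonneg_sphere B1 B2 \<Longrightarrow> norm (A *v x) \<le> norm (A *v xs)"
    using exists_max_norm_on_qform_nonneg_sphere[where A = A] by blast
  have "cadj B1 = B1" and "cadj B2 = B2"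
    unfolding B1_def B2_def
    by (simp_all add: cadj_add cadj_diff cadj_uminus cadj_scaleR cadj_herm_part cadj_skew_part)
  then have "max (sqrt (Inf (gain_sdp_feasible A B1))) (sqrt (Inf (gain_sdp_feasible A B2)))
      = norm (A *v xs)"
    using xs xs_max by (rule max_sqrt_Inf_gain_sdp_feasible)
  moreover have "cgain \<theta> A = norm (A *v xs)"
    using xs xs_max unfolding sector_eq[symmetric] by (rule cgain_eq_norm_of_maximizer)
  ultimately show ?thesis
    unfolding gain_sdp_feasible_def B1_def B2_def by simp
qed

end
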